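(* Let $n\ge 2$ and $k\ge 1$. For all $i\in[0,k]$, $$\mathfrak{z}_i(n,k)=(k+1)\,\mathfrak{z}_i(n-1,k)+(i+1)\sum_{j=i+1}^{k}\mathfrak{z}_j(n-1,k).$$
   Context: A triword of size $n$ is a word $u=u_1\cdots u_n$ with $u_i\in\{0,1,2\}$, $u_1\ne 2$, and such that $u_i=0$ implies $u_j\neq 1$ for all $j>i$; $\mathsf{Tr}(n)$ is their set, ordered componentwise ($u\preccurlyeq v$ iff $u_i\le v_i$ for all $i$). A $k$-chain of $\mathsf{Tr}(n)$ is a sequence $[u^{(1)},\dots,u^{(k)}]$ of triwords of size $n$ with $u^{(1)}\preccurlyeq u^{(2)}\preccurlyeq\cdots\preccurlyeq u^{(k)}$ (repetitions allowed). For $i\in[0,k]$, $\mathcal{Z}_i(n,k)$ is the set of $k$-chains such that $u^{(r)}$ contains the letter $0$ for all $r\in[k-i]$ and $u^{(s)}$ does not contain the letter $0$ for all $s\in[k-i+1,k]$; $\mathfrak{z}_i(n,k):=\#\mathcal{Z}_i(n,k)$. *)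

theory Defs
  imports Main
begin

definition triword :: "nat \<Rightarrow> nat list \<Rightarrow> bool" where
  "triword n u \<longleftrightarrow> length u = n \<and> set u \<subseteq> {0,1,2} \<and>
     (n \<ge> 1 \<longrightarrow> u ! 0 \<noteq> 2) \<and>
     (\<forall>i<n. \<forall>j<n. i < j \<and> u ! i = 0 \<longrightarrow> u ! j \<noteq> 1)"

definition Tr :: "nat \<Rightarrow> nat list set" where
  "Tr n = {u. triword n u}"

definition wle :: "nat list \<Rightarrow> nat list \<Rightarrow> bool" where
  "wle u v \<longleftrightarrow> length u = length v \<and> (\<forall>i<length u. u ! i \<le> v ! i)"

text \<open>k-chains of Tr(n): lists [u1,...,uk] (0-indexed) with u1 \<preccurlyeq> ... \<preccurlyeq> uk.\<close>
definition chains :: "nat \<Rightarrow> nat \<Rightarrow> nat list list set" where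
  "chains n k = {c. length c = k \<and> (\<forall>r<k. c ! r \<in> Tr n) \<and>
                    (\<forall>r. Suc r < k \<longrightarrow> wle (c ! r) (c ! Suc r))}"

definition Zset :: "nat \<Rightarrow> nat \<Rightarrow> nat \<Rightarrow> nat list list set" where
  "Zset i n k = {c \<in> chains n k.
      (\<forall>r<k - i. 0 \<in> set (c ! r)) \<and> (\<forall>s. k - i \<le> s \<and> s < k \<longrightarrow> 0 \<notin> set (c ! s))}"

definition zfrak :: "nat \<Rightarrow> nat \<Rightarrow> nat \<Rightarrow> nat" where
  "zfrak i n k = card (Zset i n k)"

end

theory Submission
  imports Defs
begin

(* Deleting the last letter of every word of a chain in Tr(n) leaves a chain in Tr(n-1), which
   lies in exactly one Z_j(n-1,k), and the deleted letters form a weakly increasing column over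
   {0,1,2}. Conversely, appending a column to a chain of Z_j(n-1,k) gives a chain of Z_i(n,k)
   exactly when the column obeys constraints depending only on i, j and k. A weakly increasing
   column is 0^q0 1^(q1-q0) 2^(k-q1), and counting the admissible thresholds (q0, q1) gives no
   column for j < i, k + 1 columns for j = i and i + 1 columns for j > i. *)

lemma triword_snoc:
  assumes "m \<ge> 1"
  shows "triword (Suc m) (u @ [x]) \<longleftrightarrow> triword m u \<and> x \<le> 2 \<and> (0 \<in> set u \<longrightarrow> x \<noteq> 1)"
proof (cases "length u = m")
  case True
  have no_one_after_zero:
    "(\<forall>i<Suc m. \<forall>j<Suc m. i < j \<and> (u @ [x]) ! i = 0 \<longrightarrow> (u @ [x]) ! j \<noteq> 1) \<longleftrightarrow>
     (\<forall>i<m. \<forall>j<m. i < j \<and> u ! i = 0 \<longrightarrow> u ! j \<noteq> 1) \<and> (0 \<in> set u \<longrightarrow> x \<noteq> 1)"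
    using True by (auto simp: nth_append less_Suc_eq in_set_conv_nth)
  show ?thesis
    using True assms no_one_after_zero unfolding triword_def by (auto simp: nth_append)
next
  case False
  then show ?thesis by (simp add: triword_def)
qed

lemma wle_snoc: "wle (u @ [x]) (v @ [y]) \<longleftrightarrow> wle u v \<and> x \<le> y"
  by (auto simp: wle_def nth_append less_Suc_eq)

lemma length_Tr: "u \<in> Tr m \<Longrightarrow> length u = m"
  by (simp add: Tr_def triword_def)

lemma finite_Tr: "finite (Tr m)"
proof (rule finite_subset)
  show "Tr m \<subseteq> {u. set u \<subseteq> {0,1,2} \<and> length u = m}"
    unfolding Tr_def triword_def by blast
qed (simp add: finite_lists_length_eq)

lemma set_chain_subset_Tr: "c \<in> chains m k \<Longrightarrow> set c \<subseteq> Tr m"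
  by (auto simp: chains_def in_set_conv_nth)

lemma finite_chains: "finite (chains m k)"
proof (rule finite_subset)
  show "chains m k \<subseteq> {c. set c \<subseteq> Tr m \<and> length c = k}"
    using set_chain_subset_Tr by (auto simp: chains_def)
qed (simp add: finite_lists_length_eq finite_Tr)

lemma finite_Zset: "finite (Zset j m k)"
  using finite_chains by (rule rev_finite_subset) (auto simp: Zset_def)

definition append_column :: "'a list list \<Rightarrow> 'a list \<Rightarrow> 'a list list" where
  "append_column p a = map2 (\<lambda>u x. u @ [x]) p a"

lemma length_append_column [simp]: "length (append_column p a) = min (length p) (length a)"
  by (simp add: append_column_def)

lemma nth_append_column [simp]:
  "r < length p \<Longrightarrow> r < length a \<Longrightarrow> append_column p a ! r = p ! r @ [a ! r]"
  by (simp add: append_column_def)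

lemma append_column_inject:
  assumes "length p = length a" "length q = length b"
    and "append_column p a = append_column q b"
  shows "p = q \<and> a = b"
proof -
  have "length p = length q" using assms by (metis length_append_column min.idem)
  moreover have "p ! r = q ! r \<and> a ! r = b ! r" if "r < length p" for r
    using assms that \<open>length p = length q\<close> by (metis nth_append_column append1_eq_conv)
  ultimately show ?thesis using assms by (simp add: list_eq_iff_nth_eq)
qed

lemma append_column_butlast_last:
  assumes "[] \<notin> set c"
  shows "append_column (map butlast c) (map last c) = c"
  unfolding append_column_def map2_map_map using assms by (intro map_idI) (metis append_butlast_last_id)

lemma append_column_in_chains_iff:
  assumes "length p = k" and "length a = k" and "m \<ge> 1"
  shows "append_column p a \<in> chains (Suc m) k \<longleftrightarrow>
    p \<in> chains m k \<and> sorted a \<and> (\<forall>r<k. a ! r \<le> 2 \<and> (0 \<in> set (p ! r) \<longrightarrow> a ! r \<noteq> 1))"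
  using assms by (auto simp: chains_def Tr_def triword_snoc wle_snoc sorted_iff_nth_Suc)

lemma downward_closed_initial_segment:
  assumes "\<And>r. Suc r < k \<Longrightarrow> P (Suc r) \<Longrightarrow> P r"
  shows "\<exists>q\<le>k. \<forall>r<k. P r \<longleftrightarrow> r < q"
  using assms
proof (induction k)
  case 0
  then show ?case by simp
next
  case (Suc k)
  then obtain q where q: "q \<le> k" "\<forall>r<k. P r \<longleftrightarrow> r < q" by force
  show ?case
  proof (cases "P k")
    case True
    have "P r" if "r \<le> k" for r
      using that by (induction r rule: inc_induct) (use True Suc.prems in auto)
    then show ?thesis by (intro exI[of _ "Suc k"]) auto
  next
    case False
    then show ?thesis using q by (intro exI[of _ q]) (auto simp: less_Suc_eq)
  qed
qed

lemma zero_in_set_if_wle: "wle u v \<Longrightarrow> 0 \<in> set v \<Longrightarrow> 0 \<in> set (u :: nat list)"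
  unfolding wle_def by (metis in_set_conv_nth le_zero_eq)

lemma chain_in_some_Zset:
  assumes "p \<in> chains m k"
  shows "\<exists>j\<le>k. p \<in> Zset j m k"
proof -
  have "\<exists>q\<le>k. \<forall>r<k. 0 \<in> set (p ! r) \<longleftrightarrow> r < q"
    using assms by (intro downward_closed_initial_segment) (auto simp: chains_def zero_in_set_if_wle)
  then obtain q where "q \<le> k" "\<forall>r<k. 0 \<in> set (p ! r) \<longleftrightarrow> r < q" by blast
  with assms have "p \<in> Zset (k - q) m k" by (auto simp: Zset_def)
  then show ?thesis by (intro exI[of _ "k - q"]) simp
qed

lemma Zset_zero_rows:
  assumes "p \<in> Zset j m k" and "r < k"
  shows "0 \<in> set (p ! r) \<longleftrightarrow> r < k - j"
  using assms unfolding Zset_def by (metis (lifting) mem_Collect_eq not_le)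

lemma Zset_unique:
  assumes "p \<in> Zset j m k" "p \<in> Zset j' m k" "j \<le> k" "j' \<le> k"
  shows "j = j'"
proof -
  have same_rows: "r < k - j \<longleftrightarrow> r < k - j'" if "r < k" for r
    using Zset_zero_rows[OF assms(1) that] Zset_zero_rows[OF assms(2) that] by simp
  have "k - j = k - j'"
  proof (rule ccontr)
    assume "k - j \<noteq> k - j'"
    then have "min (k - j) (k - j') < k" by auto
    from same_rows[OF this] \<open>k - j \<noteq> k - j'\<close> show False by auto
  qed
  then show ?thesis using assms(3,4) by simp
qed

(* Rows r < k - j of a chain in Z_j(m,k) already contain 0, so they must not receive a 1. *)
definition columns :: "nat \<Rightarrow> nat \<Rightarrow> nat \<Rightarrow> nat list set" where
  "columns i j k = {a. i \<le> j \<and> length a = k \<and> sorted a \<and> (\<forall>r<k. a ! r \<le> 2) \<and>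
     (\<forall>r<k - j. a ! r \<noteq> 1) \<and> (\<forall>r. k - j \<le> r \<and> r < k - i \<longrightarrow> a ! r = 0) \<and>
     (\<forall>r. k - i \<le> r \<and> r < k \<longrightarrow> a ! r \<noteq> 0)}"

lemma finite_columns: "finite (columns i j k)"
proof (rule finite_subset)
  show "columns i j k \<subseteq> {a. set a \<subseteq> {0..2} \<and> length a = k}"
    by (auto simp: columns_def in_set_conv_nth)
qed (simp add: finite_lists_length_eq)

lemma append_column_in_Zset_iff:
  assumes p: "p \<in> Zset j m k" and "length a = k" "m \<ge> 1" "i \<le> k" "j \<le> k"
  shows "append_column p a \<in> Zset i (Suc m) k \<longleftrightarrow> a \<in> columns i j k"
proof -
  have "p \<in> chains m k" "length p = k" using p by (auto simp: Zset_def chains_def)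
  moreover have "\<forall>r<k. 0 \<in> set (p ! r) \<longleftrightarrow> r < k - j" using Zset_zero_rows[OF p] by blast
  ultimately show ?thesis
    using assms(2-5) by (auto simp: Zset_def columns_def append_column_in_chains_iff)
qed

lemma inj_on_append_column_Zset:
  "inj_on (\<lambda>(j, p, a). append_column p a) (SIGMA j:{..k}. Zset j m k \<times> columns i j k)"
proof (rule inj_onI)
  fix x y
  assume "x \<in> (SIGMA j:{..k}. Zset j m k \<times> columns i j k)"
    and "y \<in> (SIGMA j:{..k}. Zset j m k \<times> columns i j k)"
    and eq: "(\<lambda>(j, p, a). append_column p a) x = (\<lambda>(j, p, a). append_column p a) y"
  then obtain j p a j' p' a'
    where x: "x = (j, p, a)" "j \<le> k" "p \<in> Zset j m k" "a \<in> columns i j k"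
    and y: "y = (j', p', a')" "j' \<le> k" "p' \<in> Zset j' m k" "a' \<in> columns i j' k"
    by auto
  have "p = p' \<and> a = a'"
    using x y eq by (intro append_column_inject) (auto simp: Zset_def chains_def columns_def)
  moreover have "j = j'" using Zset_unique x y calculation by blast
  ultimately show "x = y" using x y by simp
qed

lemma image_append_column_Zset:
  assumes "m \<ge> 1" and "i \<le> k"
  shows "(\<lambda>(j, p, a). append_column p a) ` (SIGMA j:{..k}. Zset j m k \<times> columns i j k) =
    Zset i (Suc m) k"
proof (intro equalityI subsetI)
  fix c
  assume "c \<in> (\<lambda>(j, p, a). append_column p a) ` (SIGMA j:{..k}. Zset j m k \<times> columns i j k)"
  then obtain j p a where "c = append_column p a" "j \<le> k" "p \<in> Zset j m k" "a \<in> columns i j k"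
    by auto
  then show "c \<in> Zset i (Suc m) k"
    using append_column_in_Zset_iff[of p j m k a i] assms by (simp add: columns_def)
next
  fix c
  assume c: "c \<in> Zset i (Suc m) k"
  then have "c \<in> chains (Suc m) k" by (simp add: Zset_def)
  then have "[] \<notin> set c" and "length c = k"
    using set_chain_subset_Tr length_Tr by (fastforce, simp add: chains_def)
  define p a where "p = map butlast c" and "a = map last c"
  have c_eq: "c = append_column p a"
    using \<open>[] \<notin> set c\<close> by (simp add: p_def a_def append_column_butlast_last)
  have len: "length p = k" "length a = k"
    using \<open>length c = k\<close> by (simp_all add: p_def a_def)
  have "p \<in> chains m k"
    using \<open>c \<in> chains (Suc m) k\<close> unfolding c_eq
    by (simp add: append_column_in_chains_iff[OF len assms(1)])
  then obtain j where "j \<le> k" "p \<in> Zset j m k" using chain_in_some_Zset by blast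
  moreover have "a \<in> columns i j k"
    using c unfolding c_eq
    by (simp add: append_column_in_Zset_iff[OF \<open>p \<in> Zset j m k\<close> len(2) assms \<open>j \<le> k\<close>])
  ultimately show "c \<in> (\<lambda>(j, p, a). append_column p a) ` (SIGMA j:{..k}. Zset j m k \<times> columns i j k)"
    using c_eq by (intro image_eqI[of _ _ "(j, p, a)"]) auto
qed

lemma zfrak_Suc_eq_sum:
  assumes "m \<ge> 1" and "i \<le> k"
  shows "zfrak i (Suc m) k = (\<Sum>j\<le>k. zfrak j m k * card (columns i j k))"
proof -
  have "zfrak i (Suc m) k = card (SIGMA j:{..k}. Zset j m k \<times> columns i j k)"
    unfolding zfrak_def
    using image_append_column_Zset[OF assms, symmetric] card_image[OF inj_on_append_column_Zset]
    by simp
  also have "\<dots> = (\<Sum>j\<le>k. zfrak j m k * card (columns i j k))"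
    by (simp add: card_SigmaI finite_Zset finite_columns card_cartesian_product zfrak_def)
  finally show ?thesis .
qed

definition block_word :: "nat \<Rightarrow> nat \<Rightarrow> nat \<Rightarrow> nat list" where
  "block_word q0 q1 k = map (\<lambda>r. if r < q0 then 0 else if r < q1 then 1 else 2) [0..<k]"

lemma length_block_word [simp]: "length (block_word q0 q1 k) = k"
  by (simp add: block_word_def)

lemma nth_block_word [simp]:
  "r < k \<Longrightarrow> block_word q0 q1 k ! r = (if r < q0 then 0 else if r < q1 then 1 else 2)"
  by (simp add: block_word_def)

lemma sorted_block_word: "q0 \<le> q1 \<Longrightarrow> sorted (block_word q0 q1 k)"
  by (auto simp: sorted_iff_nth_Suc)

lemma inj_on_block_word:
  "inj_on (\<lambda>(q0, q1). block_word q0 q1 k) {(q0, q1). q0 \<le> q1 \<and> q1 \<le> k}"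
proof (rule inj_onI, clarify)
  fix q0 q1 q0' q1'
  assume bounds: "q0 \<le> q1" "q1 \<le> k" "q0' \<le> q1'" "q1' \<le> k"
    and eq: "block_word q0 q1 k = block_word q0' q1' k"
  have entries: "(if r < q0 then 0 else if r < q1 then 1 else 2 :: nat) =
                 (if r < q0' then 0 else if r < q1' then 1 else 2)" if "r < k" for r
    using arg_cong[OF eq, of "\<lambda>w. w ! r"] that by simp
  have "q0 = q0'"
    using entries[of "min q0 q0'"] bounds by (cases q0 q0' rule: linorder_cases) (auto split: if_splits)
  moreover have "q1 = q1'"
    using entries[of "min q1 q1'"] bounds calculation
    by (cases q1 q1' rule: linorder_cases) (auto split: if_splits)
  ultimately show "q0 = q0' \<and> q1 = q1'" ..
qed

lemma sorted_eq_block_word: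
  assumes "sorted a" and "\<forall>r<length a. a ! r \<le> 2"
  shows "\<exists>q0 q1. q0 \<le> q1 \<and> q1 \<le> length a \<and> a = block_word q0 q1 (length a)"
proof -
  have thresholds: "\<exists>q\<le>length a. \<forall>r<length a. a ! r \<le> t \<longleftrightarrow> r < q" for t
    using assms(1) by (intro downward_closed_initial_segment) (auto simp: sorted_iff_nth_Suc order_trans)
  obtain q0 where q0: "q0 \<le> length a" "\<forall>r<length a. a ! r \<le> 0 \<longleftrightarrow> r < q0"
    using thresholds[of 0] by blast
  obtain q1 where q1: "q1 \<le> length a" "\<forall>r<length a. a ! r \<le> 1 \<longleftrightarrow> r < q1"
    using thresholds[of 1] by blast
  have "q0 \<le> q1"
  proof (rule ccontr)
    assume "\<not> q0 \<le> q1"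
    then have "q1 < length a" "a ! q1 \<le> 0" using q0 by auto
    then show False using q1(2) by auto
  qed
  moreover have "a = block_word q0 q1 (length a)"
    using q0(2) q1(2) assms(2) by (intro nth_equalityI) (auto simp: not_less le_Suc_eq numeral_2_eq_2)
  ultimately show ?thesis using q1(1) by blast
qed

lemma block_word_in_columns_iff:
  assumes "q0 \<le> q1" "q1 \<le> k" "i \<le> j" "j \<le> k"
  shows "block_word q0 q1 k \<in> columns i j k \<longleftrightarrow>
    q0 \<le> k - i \<and> (q0 = q1 \<or> k - j \<le> q0) \<and> (j = i \<or> k - i \<le> q0)"
proof
  assume "block_word q0 q1 k \<in> columns i j k"
  then have no_one: "\<forall>r<k - j. block_word q0 q1 k ! r \<noteq> 1"
    and zero: "\<forall>r. k - j \<le> r \<and> r < k - i \<longrightarrow> block_word q0 q1 k ! r = 0"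
    and nonzero: "\<forall>r. k - i \<le> r \<and> r < k \<longrightarrow> block_word q0 q1 k ! r \<noteq> 0"
    by (simp_all add: columns_def)
  have "q0 \<le> k - i"
    using nonzero[rule_format, of "k - i"] assms by (cases "i = 0") (auto split: if_splits)
  moreover have "q0 = q1 \<or> k - j \<le> q0"
    using no_one[rule_format, of q0] assms by (auto split: if_splits)
  moreover have "j = i \<or> k - i \<le> q0"
  proof (cases "j = i")
    case False
    then have "k - j \<le> k - i - 1" "k - i - 1 < k - i" using assms by auto
    then show ?thesis using zero[rule_format, of "k - i - 1"] by (auto split: if_splits)
  qed simp
  ultimately show "q0 \<le> k - i \<and> (q0 = q1 \<or> k - j \<le> q0) \<and> (j = i \<or> k - i \<le> q0)"
    by blast
next
  assume "q0 \<le> k - i \<and> (q0 = q1 \<or> k - j \<le> q0) \<and> (j = i \<or> k - i \<le> q0)"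
  then show "block_word q0 q1 k \<in> columns i j k"
    using assms by (auto simp: columns_def sorted_block_word)
qed

definition column_thresholds :: "nat \<Rightarrow> nat \<Rightarrow> nat \<Rightarrow> (nat \<times> nat) set" where
  "column_thresholds i j k = {(q0, q1). q0 \<le> q1 \<and> q1 \<le> k \<and> q0 \<le> k - i \<and>
     (q0 = q1 \<or> k - j \<le> q0) \<and> (j = i \<or> k - i \<le> q0)}"

lemma columns_eq_image:
  assumes "i \<le> j" "j \<le> k"
  shows "columns i j k = (\<lambda>(q0, q1). block_word q0 q1 k) ` column_thresholds i j k"
proof (intro equalityI subsetI)
  fix a
  assume a: "a \<in> columns i j k"
  then obtain q0 q1 where "q0 \<le> q1" "q1 \<le> k" "a = block_word q0 q1 k"
    using sorted_eq_block_word[of a] by (auto simp: columns_def)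
  with a show "a \<in> (\<lambda>(q0, q1). block_word q0 q1 k) ` column_thresholds i j k"
    using block_word_in_columns_iff assms by (auto simp: column_thresholds_def)
next
  fix a
  assume "a \<in> (\<lambda>(q0, q1). block_word q0 q1 k) ` column_thresholds i j k"
  then show "a \<in> columns i j k"
    using block_word_in_columns_iff assms by (auto simp: column_thresholds_def)
qed

lemma card_column_thresholds:
  assumes "i \<le> j" "j \<le> k"
  shows "card (column_thresholds i j k) = (if j = i then k + 1 else i + 1)"
proof (cases "j = i")
  case True
  then have "column_thresholds i j k = (\<lambda>q. (q, q)) ` {..<k - i} \<union> {k - i} \<times> {k - i..k}"
    by (auto simp: column_thresholds_def)
  moreover have "card ((\<lambda>q. (q, q)) ` {..<k - i}) = k - i"
    by (simp add: card_image inj_on_def)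
  moreover have "(\<lambda>q. (q, q)) ` {..<k - i} \<inter> {k - i} \<times> {k - i..k} = {}"
    by auto
  ultimately show ?thesis
    using True assms by (simp add: card_Un_disjoint card_cartesian_product)
next
  case False
  then have "column_thresholds i j k = {k - i} \<times> {k - i..k}"
    using assms by (auto simp: column_thresholds_def)
  then show ?thesis using False assms by (simp add: card_cartesian_product)
qed

lemma card_columns:
  assumes "i \<le> k" "j \<le> k"
  shows "card (columns i j k) = (if j < i then 0 else if j = i then k + 1 else i + 1)"
proof (cases "j < i")
  case True
  then show ?thesis by (simp add: columns_def)
next
  case False
  have "inj_on (\<lambda>(q0, q1). block_word q0 q1 k) (column_thresholds i j k)"
    by (rule inj_on_subset[OF inj_on_block_word]) (auto simp: column_thresholds_def)
  then show ?thesis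
    using False assms by (simp add: columns_eq_image card_image card_column_thresholds)
qed

theorem proposition3p6:
  fixes n k i :: nat
  assumes "n \<ge> 2" and "k \<ge> 1" and "i \<le> k"
  shows "zfrak i n k = (k + 1) * zfrak i (n - 1) k + (i + 1) * (\<Sum>j = i + 1..k. zfrak j (n - 1) k)"
proof -
  define m where "m = n - 1"
  have n: "n = Suc m" "m \<ge> 1" using assms(1) by (simp_all add: m_def)
  have "zfrak i n k = (\<Sum>j\<le>k. zfrak j m k * card (columns i j k))"
    using n assms(3) by (simp add: zfrak_Suc_eq_sum)
  also have "\<dots> = (\<Sum>j\<in>insert i {i + 1..k}. zfrak j m k * card (columns i j k))"
    using assms(3) by (intro sum.mono_neutral_right) (auto simp: card_columns)
  also have "\<dots> = (k + 1) * zfrak i m k + (\<Sum>j = i + 1..k. zfrak j m k * card (columns i j k))"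
    using assms(3) by (simp add: card_columns)
  also have "(\<Sum>j = i + 1..k. zfrak j m k * card (columns i j k)) =
      (i + 1) * (\<Sum>j = i + 1..k. zfrak j m k)"
    unfolding sum_distrib_left using assms(3) by (intro sum.cong) (auto simp: card_columns)
  finally show ?thesis by (simp add: m_def)
qed

end
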